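(* If $T$ is a tree of order $n \ge 2$ with no strong support vertex, then $\gamma_{\rm gr}^t(T) \ge \frac{2}{3}(n+1)$, with equality if and only if $T \in \mathcal{T}$.
   Context: A leaf is a vertex of degree $1$, a support vertex is a vertex adjacent to a leaf, and a strong support vertex is a vertex adjacent to at least two leaves. Operation $\mathcal{O}_1$: given a tree $T'$ and a support vertex $v$ of $T'$, add a new path $v_1v_2v_3$ (three new vertices) and the edge $vv_1$. The family $\mathcal{T}$ is the smallest family of trees containing the path $P_2$ and closed under operation $\mathcal{O}_1$. $N(v)$ denotes the open neighborhood of $v$. A sequence $S=(v_1,\ldots,v_k)$ of distinct vertices of a graph $G$ without isolated vertices is a legal sequence if $N(v_i)\setminus \bigcup_{j=1}^{i-1} N(v_j)\neq\emptyset$ for every $i\in\{2,\ldots,k\}$, and a total dominating sequence if moreover $\{v_1,\ldots,v_k\}$ is a total dominating set of $G$. $\gamma_{\rm gr}^t(G)$ is the maximum length of a total dominating sequence of $G$. *)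

theory Defs
  imports Complex_Main
begin

definition graph :: "'a set \<Rightarrow> 'a set set \<Rightarrow> bool" where
  "graph V E \<longleftrightarrow> finite V \<and> (\<forall>e\<in>E. e \<subseteq> V \<and> card e = 2)"

definition nbhd :: "'a set set \<Rightarrow> 'a \<Rightarrow> 'a set" where
  "nbhd E v = {u. {u, v} \<in> E}"

definition adj :: "'a set set \<Rightarrow> 'a \<Rightarrow> 'a \<Rightarrow> bool" where
  "adj E u v \<longleftrightarrow> {u, v} \<in> E"

definition connected_graph :: "'a set \<Rightarrow> 'a set set \<Rightarrow> bool" where
  "connected_graph V E \<longleftrightarrow> (\<forall>u\<in>V. \<forall>v\<in>V. (adj E)\<^sup>*\<^sup>* u v)"

definition is_tree :: "'a set \<Rightarrow> 'a set set \<Rightarrow> bool" where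
  "is_tree V E \<longleftrightarrow> graph V E \<and> V \<noteq> {} \<and> connected_graph V E \<and> card E = card V - 1"

definition leaf :: "'a set set \<Rightarrow> 'a \<Rightarrow> bool" where
  "leaf E v \<longleftrightarrow> card (nbhd E v) = 1"

definition support_vertex :: "'a set set \<Rightarrow> 'a \<Rightarrow> bool" where
  "support_vertex E v \<longleftrightarrow> (\<exists>u\<in>nbhd E v. leaf E u)"

definition strong_support_vertex :: "'a set set \<Rightarrow> 'a \<Rightarrow> bool" where
  "strong_support_vertex E v \<longleftrightarrow> card {u\<in>nbhd E v. leaf E u} \<ge> 2"

text \<open>The family \<T>: contains P2 and is closed under operation O1.
  Vertices are labelled by elements of 'a; the family is isomorphism-closed
  because the labels are arbitrary.\<close>
inductive in_family_T :: "'a set \<Rightarrow> 'a set set \<Rightarrow> bool" where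
  P2: "a \<noteq> b \<Longrightarrow> in_family_T {a, b} {{a, b}}"
| O1: "\<lbrakk> in_family_T V E; v \<in> V; support_vertex E v;
        v1 \<notin> V; v2 \<notin> V; v3 \<notin> V; v1 \<noteq> v2; v1 \<noteq> v3; v2 \<noteq> v3 \<rbrakk>
      \<Longrightarrow> in_family_T (V \<union> {v1, v2, v3}) (E \<union> {{v, v1}, {v1, v2}, {v2, v3}})"

definition legal_sequence :: "'a set \<Rightarrow> 'a set set \<Rightarrow> 'a list \<Rightarrow> bool" where
  "legal_sequence V E S \<longleftrightarrow> distinct S \<and> set S \<subseteq> V \<and>
     (\<forall>i. 1 \<le> i \<and> i < length S \<longrightarrow>
        nbhd E (S ! i) - (\<Union>j<i. nbhd E (S ! j)) \<noteq> {})"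

definition total_dominating_set :: "'a set \<Rightarrow> 'a set set \<Rightarrow> 'a set \<Rightarrow> bool" where
  "total_dominating_set V E D \<longleftrightarrow> D \<subseteq> V \<and> (\<forall>v\<in>V. \<exists>d\<in>D. d \<in> nbhd E v)"

definition total_dominating_sequence :: "'a set \<Rightarrow> 'a set set \<Rightarrow> 'a list \<Rightarrow> bool" where
  "total_dominating_sequence V E S \<longleftrightarrow>
     legal_sequence V E S \<and> total_dominating_set V E (set S)"

definition grundy_total_domination :: "'a set \<Rightarrow> 'a set set \<Rightarrow> nat" where
  "grundy_total_domination V E = Max {length S | S. total_dominating_sequence V E S}"

end

theory Submission
  imports Defs
begin

text \<open>
  For a forest on \<open>W\<close> without isolated vertices, with \<open>\<ell>\<close> leaves and \<open>s\<close> support vertices,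
  there is a legal sequence of length at least \<open>2/3 (|W| + 1 - \<ell> + s)\<close>. By induction: take a
  leaf \<open>x\<close> whose support \<open>y\<close> is strong or has degree at most two. If \<open>y\<close> has a second leaf,
  delete \<open>x\<close>; otherwise delete \<open>x\<close> and \<open>y\<close> and frame a sequence of the rest as \<open>x, \<dots>, y\<close>.
  Without strong support vertices \<open>\<ell> \<le> s\<close>, which gives \<open>2/3 (n + 1)\<close>.

  In a tree attaining the bound the same deletion is tight, which forces a pendant path
  \<open>x y z w\<close> with \<open>w\<close> a support vertex; deleting \<open>x, y, z\<close> leaves a tree attaining the bound,
  so the tree arises by operation \<open>\<O>\<^sub>1\<close>. Conversely, a tree of \<open>\<T>\<close> has a vertex cover \<open>J\<close> with
  \<open>3 |J| = n + 1\<close>, and a legal sequence has at most \<open>2 |J|\<close> vertices because those outside \<open>J\<close>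
  own distinct private neighbours inside \<open>J\<close>.
\<close>

section \<open>Legal sequences\<close>

text \<open>\<open>C\<close> is the set of vertices dominated before the sequence starts.\<close>
fun legal_from :: "('a \<Rightarrow> 'a set) \<Rightarrow> 'a set \<Rightarrow> 'a list \<Rightarrow> bool" where
  "legal_from N C [] = True"
| "legal_from N C (x # xs) \<longleftrightarrow> N x - C \<noteq> {} \<and> legal_from N (C \<union> N x) xs"

lemma legal_from_append:
  "legal_from N C (xs @ ys) \<longleftrightarrow> legal_from N C xs \<and> legal_from N (C \<union> \<Union>(N ` set xs)) ys"
  by (induction xs arbitrary: C) (auto simp: Un_assoc)

lemma legal_from_nbhd_not_covered: "legal_from N C xs \<Longrightarrow> x \<in> set xs \<Longrightarrow> N x - C \<noteq> {}"
  by (induction xs arbitrary: C) auto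

lemma legal_from_distinct: "legal_from N C xs \<Longrightarrow> distinct xs"
proof (induction xs arbitrary: C)
  case (Cons x xs)
  then have "x \<notin> set xs"
    using legal_from_nbhd_not_covered[of N "C \<union> N x" xs x] by auto
  then show ?case using Cons.IH[of "C \<union> N x"] Cons.prems by simp
qed simp

lemma legal_from_iff_nth:
  "legal_from N C xs \<longleftrightarrow> (\<forall>i<length xs. N (xs ! i) - C - (\<Union>j<i. N (xs ! j)) \<noteq> {})"
proof (induction xs arbitrary: C)
  case (Cons x xs)
  have shift: "(\<Union>j<Suc k. N ((x # xs) ! j)) = N x \<union> (\<Union>j<k. N (xs ! j))" for k
    by (auto simp: less_Suc_eq_0_disj)
  have "(\<forall>i<length (x # xs). N ((x # xs) ! i) - C - (\<Union>j<i. N ((x # xs) ! j)) \<noteq> {})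
      \<longleftrightarrow> N x - C \<noteq> {} \<and> (\<forall>k<length xs. N (xs ! k) - (C \<union> N x) - (\<Union>j<k. N (xs ! j)) \<noteq> {})"
    by (simp only: All_less_Suc2 length_Cons shift nth_Cons_0 nth_Cons_Suc Diff_Un Un_Diff_Int)
      (auto simp: set_diff_eq)
  then show ?case using Cons.IH by simp
qed simp

lemma legal_from_private_neighbours:
  "legal_from N C xs \<Longrightarrow> \<exists>f. inj_on f (set xs) \<and> (\<forall>z\<in>set xs. f z \<in> N z - C)"
proof (induction xs arbitrary: C)
  case (Cons x xs)
  then obtain y where y: "y \<in> N x - C" and rest: "legal_from N (C \<union> N x) xs" by auto
  from Cons.IH[OF rest] obtain f where f: "inj_on f (set xs)" "\<forall>z\<in>set xs. f z \<in> N z - (C \<union> N x)"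
    by blast
  have "x \<notin> set xs" using legal_from_distinct[OF Cons.prems] by simp
  then have "inj_on (f(x := y)) (set (x # xs)) \<and> (\<forall>z\<in>set (x # xs). (f(x := y)) z \<in> N z - C)"
    using f y by (auto simp: inj_on_def)
  then show ?case by blast
qed simp

lemma legal_from_mono:
  assumes "legal_from N' C' xs"
    and "\<forall>z\<in>set xs. N' z \<subseteq> N z \<and> N z \<subseteq> N' z \<union> X \<and> N' z \<inter> X = {}"
    and "C \<subseteq> C' \<union> X"
  shows "legal_from N C xs"
  using assms
proof (induction xs arbitrary: C C')
  case (Cons x xs)
  from Cons.prems obtain a where "a \<in> N' x" "a \<notin> C'" by auto
  then have "a \<in> N x - C" using Cons.prems by auto
  moreover have "legal_from N (C \<union> N x) xs"
    using Cons.IH[of "C' \<union> N' x" "C \<union> N x"] Cons.prems by auto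
  ultimately show ?case by auto
qed simp

lemma nbhd_commute: "u \<in> nbhd E v \<longleftrightarrow> v \<in> nbhd E u"
  by (simp add: nbhd_def insert_commute)

lemma nbhd_subset: "graph V E \<Longrightarrow> nbhd E v \<subseteq> V"
  unfolding graph_def nbhd_def by auto

lemma not_in_nbhd_self: "graph V E \<Longrightarrow> v \<notin> nbhd E v"
  unfolding graph_def nbhd_def by force

lemma finite_nbhd: "graph V E \<Longrightarrow> finite (nbhd E v)"
  using nbhd_subset[of V E v] unfolding graph_def by (auto intro: finite_subset)

lemma graph_finite_edges: "graph V E \<Longrightarrow> finite E"
  unfolding graph_def by (meson Pow_iff finite_Pow_iff rev_finite_subset subsetI)

lemma graph_edgeE:
  assumes "graph V E" "e \<in> E" "a \<in> e"
  obtains b where "e = {a, b}" "b \<in> nbhd E a"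
proof -
  obtain p q where "e = {p, q}" using assms unfolding graph_def by (metis card_2_iff)
  then show ?thesis using that assms(2,3) by (auto simp: nbhd_def insert_commute)
qed

lemma connected_no_isolated:
  assumes g: "graph V E" and c: "connected_graph V E" and "card V \<ge> 2" "v \<in> V"
  shows "nbhd E v \<noteq> {}"
proof -
  have "finite V" using g graph_def by auto
  then obtain u where u: "u \<in> V" "u \<noteq> v"
    using assms(3,4) by (metis card_le_Suc0_iff_eq not_less_eq_eq numeral_2_eq_2)
  have "(adj E)\<^sup>*\<^sup>* v u" using c u assms(4) unfolding connected_graph_def by auto
  then obtain w where "adj E v w" using u(2) by (metis converse_rtranclpE)
  then show ?thesis by (auto simp: adj_def nbhd_def insert_commute)
qed

lemma legal_sequence_iff:
  assumes "graph V E" "\<forall>v\<in>V. nbhd E v \<noteq> {}"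
  shows "legal_sequence V E S \<longleftrightarrow> set S \<subseteq> V \<and> legal_from (nbhd E) {} S"
proof -
  have "nbhd E (S ! 0) \<noteq> {}" if "set S \<subseteq> V" "S \<noteq> []"
    using that assms(2) by (metis hd_conv_nth hd_in_set subsetD)
  then have "set S \<subseteq> V \<Longrightarrow> (\<forall>i. 1 \<le> i \<and> i < length S \<longrightarrow> nbhd E (S ! i) - (\<Union>j<i. nbhd E (S ! j)) \<noteq> {})
      \<longleftrightarrow> legal_from (nbhd E) {} S"
    unfolding legal_from_iff_nth by (metis Diff_empty One_nat_def lessThan_0 UN_empty less_one
        not_less length_greater_0_conv)
  then show ?thesis
    unfolding legal_sequence_def using legal_from_distinct by blast
qed

lemma legal_from_extends_to_total_dominating_sequence:
  assumes g: "graph V E" and ni: "\<forall>v\<in>V. nbhd E v \<noteq> {}"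
    and "set S \<subseteq> V" "legal_from (nbhd E) {} S"
  shows "\<exists>S'. total_dominating_sequence V E S' \<and> length S \<le> length S'"
  using assms(3,4)
proof (induction "card V - length S" arbitrary: S rule: less_induct)
  case less
  have finV: "finite V" using g graph_def by auto
  show ?case
  proof (cases "\<forall>v\<in>V. \<exists>d\<in>set S. d \<in> nbhd E v")
    case True
    then have "total_dominating_sequence V E S"
      unfolding total_dominating_sequence_def total_dominating_set_def
      using legal_sequence_iff[OF g ni] less.prems by auto
    then show ?thesis by blast
  next
    case False
    then obtain v where v: "v \<in> V" "\<forall>d\<in>set S. d \<notin> nbhd E v" by blast
    obtain d where d: "d \<in> nbhd E v" using ni v by blast
    have "v \<notin> \<Union>(nbhd E ` set S)" using v(2) nbhd_commute by fastforce
    then have legal: "legal_from (nbhd E) {} (S @ [d])"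
      using less.prems d nbhd_commute by (fastforce simp: legal_from_append)
    moreover have set: "set (S @ [d]) \<subseteq> V" using d nbhd_subset[OF g] less.prems by auto
    moreover have "length (S @ [d]) \<le> card V"
      using legal_from_distinct[OF legal] set finV by (metis card_mono distinct_card)
    ultimately show ?thesis using less.hyps[of "S @ [d]"] by fastforce
  qed
qed

lemma grundy_total_domination_legal_from:
  assumes g: "graph V E" and ni: "\<forall>v\<in>V. nbhd E v \<noteq> {}"
  shows grundy_total_domination_ge_legal_from:
      "set S \<subseteq> V \<Longrightarrow> legal_from (nbhd E) {} S \<Longrightarrow> length S \<le> grundy_total_domination V E"
    and grundy_total_domination_attained:
      "\<exists>S. set S \<subseteq> V \<and> legal_from (nbhd E) {} S \<and> length S = grundy_total_domination V E"
proof -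
  define A where "A = {length S | S. total_dominating_sequence V E S}"
  have "finite V" using g graph_def by auto
  then have "A \<subseteq> {..card V}"
    unfolding A_def total_dominating_sequence_def legal_sequence_def
    by (auto intro: card_mono simp flip: distinct_card)
  then have finA: "finite A" by (rule finite_subset) simp
  have G: "grundy_total_domination V E = Max A" unfolding grundy_total_domination_def A_def ..
  have le: "length S \<le> grundy_total_domination V E"
    if S: "set S \<subseteq> V" "legal_from (nbhd E) {} S" for S
  proof -
    obtain S' where "total_dominating_sequence V E S'" "length S \<le> length S'"
      using legal_from_extends_to_total_dominating_sequence[OF g ni S] by blast
    then show ?thesis using G finA A_def by (auto intro: le_trans[OF _ Max_ge])
  qed
  then show "set S \<subseteq> V \<Longrightarrow> legal_from (nbhd E) {} S \<Longrightarrow> length S \<le> grundy_total_domination V E" .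
  have "A \<noteq> {}"
    using legal_from_extends_to_total_dominating_sequence[OF g ni, of "[]"] A_def by auto
  then obtain S where "total_dominating_sequence V E S" "length S = grundy_total_domination V E"
    using Max_in[OF finA] G A_def by auto
  then show "\<exists>S. set S \<subseteq> V \<and> legal_from (nbhd E) {} S \<and> length S = grundy_total_domination V E"
    using legal_sequence_iff[OF g ni] unfolding total_dominating_sequence_def by blast
qed

section \<open>Forests\<close>

definition nbhd_in :: "'a set set \<Rightarrow> 'a set \<Rightarrow> 'a \<Rightarrow> 'a set" where
  "nbhd_in E W v = nbhd E v \<inter> W"

definition induced_edges :: "'a set set \<Rightarrow> 'a set \<Rightarrow> 'a set set" where
  "induced_edges E W = {e\<in>E. e \<subseteq> W}"

definition forest :: "'a set \<Rightarrow> 'a set set \<Rightarrow> bool" where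
  "forest V E \<longleftrightarrow> (\<forall>W\<subseteq>V. W \<noteq> {} \<longrightarrow> card (induced_edges E W) < card W)"

lemma sum_card_nbhd_in:
  assumes g: "graph V E" and W: "W \<subseteq> V"
  shows "(\<Sum>v\<in>W. card (nbhd_in E W v)) = 2 * card (induced_edges E W)"
proof -
  have finW: "finite W" using g W unfolding graph_def by (auto intro: finite_subset)
  have finE: "finite (induced_edges E W)"
    using graph_finite_edges[OF g] unfolding induced_edges_def by auto
  have deg: "card (nbhd_in E W v) = card {e\<in>induced_edges E W. v \<in> e}" if v: "v \<in> W" for v
  proof (rule bij_betw_same_card[of "\<lambda>u. {u, v}"], rule bij_betwI')
    fix e assume e: "e \<in> {e\<in>induced_edges E W. v \<in> e}"
    then obtain u where "e = {v, u}" "u \<in> nbhd E v"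
      using graph_edgeE[OF g] unfolding induced_edges_def by blast
    then show "\<exists>u\<in>nbhd_in E W v. e = {u, v}"
      using e unfolding nbhd_in_def induced_edges_def by (auto simp: insert_commute)
  qed (use v in \<open>auto simp: nbhd_in_def induced_edges_def nbhd_def doubleton_eq_iff\<close>)
  have "(\<Sum>v\<in>W. card (nbhd_in E W v)) = (\<Sum>v\<in>W. card {e\<in>induced_edges E W. v \<in> e})"
    using deg by (rule sum.cong[OF refl])
  also have "\<dots> = (\<Sum>v\<in>W. \<Sum>e\<in>induced_edges E W. if v \<in> e then 1 else 0)"
    using finE by (simp add: sum.inter_filter[symmetric])
  also have "\<dots> = (\<Sum>e\<in>induced_edges E W. card {v\<in>W. v \<in> e})"
    using finW by (subst sum.swap) (simp add: sum.inter_filter[symmetric])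
  also have "\<dots> = (\<Sum>e\<in>induced_edges E W. 2)"
  proof (rule sum.cong[OF refl])
    fix e assume "e \<in> induced_edges E W"
    then have "{v\<in>W. v \<in> e} = e" "card e = 2" using g unfolding induced_edges_def graph_def by auto
    then show "card {v\<in>W. v \<in> e} = 2" by simp
  qed
  finally show ?thesis by simp
qed

lemma tree_has_leaf:
  assumes g: "graph V E" and ni: "\<forall>v\<in>V. nbhd E v \<noteq> {}" and cE: "card E + 1 = card V"
  shows "\<exists>x\<in>V. card (nbhd E x) = 1"
proof (rule ccontr)
  assume "\<not> ?thesis"
  then have "\<forall>v\<in>V. 2 \<le> card (nbhd E v)"
    using ni finite_nbhd[OF g]
    by (metis One_nat_def Suc_1 Suc_leI card_gt_0_iff le_neq_implies_less)
  then have "(\<Sum>v\<in>V. 2) \<le> (\<Sum>v\<in>V. card (nbhd E v))"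
    by (intro sum_mono) auto
  moreover have "nbhd_in E V = nbhd E" "induced_edges E V = E"
    using g nbhd_subset[OF g] by (auto simp: nbhd_in_def induced_edges_def graph_def fun_eq_iff)
  ultimately show False using sum_card_nbhd_in[OF g order_refl] cE by simp
qed

lemma rtranclp_adj_remove_leaf:
  assumes "nbhd E x = {y}" "(adj E)\<^sup>*\<^sup>* u w" "u \<noteq> x" "w \<noteq> x" "x \<noteq> y"
  shows "(adj {e\<in>E. x \<notin> e})\<^sup>*\<^sup>* u w"
proof -
  have "(w \<noteq> x \<longrightarrow> (adj {e\<in>E. x \<notin> e})\<^sup>*\<^sup>* u w) \<and> (w = x \<longrightarrow> (adj {e\<in>E. x \<notin> e})\<^sup>*\<^sup>* u y)"
    using assms(2)
  proof (induction rule: rtranclp_induct)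
    case (step w z)
    have wz: "{w, z} \<in> E" using step.hyps(2) by (simp add: adj_def)
    show ?case
    proof (cases "z = x")
      case True
      then have "w \<in> nbhd E x" using wz by (simp add: nbhd_def)
      then have "w = y" using assms(1) by simp
      then show ?thesis using step.IH True assms(5) by auto
    next
      case False
      show ?thesis
      proof (cases "w = x")
        case True
        then have "z \<in> nbhd E x" using wz by (simp add: nbhd_def insert_commute)
        then have "z = y" using assms(1) by simp
        then show ?thesis using step.IH True by auto
      next
        case False
        then have "adj {e\<in>E. x \<notin> e} w z" using wz \<open>z \<noteq> x\<close> by (simp add: adj_def)
        then show ?thesis using step.IH False \<open>z \<noteq> x\<close> by (meson rtranclp.rtrancl_into_rtrancl)
      qed
    qed
  qed (use assms(3) in simp)
  then show ?thesis using assms(4) by simp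
qed

lemma edge_at_leaf:
  assumes "graph V E" "nbhd E x = {y}" "e \<in> E" "x \<in> e"
  shows "e = {x, y}"
  using graph_edgeE[OF assms(1,3,4)] assms(2) by auto

lemma forest_insert_leaf:
  assumes g: "graph V E" and x: "x \<in> V" "nbhd E x = {y}"
    and forest': "forest (V - {x}) {e\<in>E. x \<notin> e}"
  shows "forest V E"
  unfolding forest_def
proof (intro allI impI)
  fix W assume W: "W \<subseteq> V" "W \<noteq> {}"
  have finW: "finite W" using g W unfolding graph_def by (auto intro: finite_subset)
  show "card (induced_edges E W) < card W"
  proof (cases "x \<in> W")
    case False
    then have "induced_edges E W = induced_edges {e\<in>E. x \<notin> e} W" unfolding induced_edges_def by auto
    then show ?thesis using forest' W False unfolding forest_def by auto
  next
    case True
    show ?thesis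
    proof (cases "W = {x}")
      case True
      have "e \<notin> E" if "e \<subseteq> {x}" for e
      proof
        assume "e \<in> E"
        then have "card e = 2" using g by (auto simp: graph_def)
        moreover have "card e \<le> 1" using that card_mono[of "{x}" e] by simp
        ultimately show False by simp
      qed
      then have "induced_edges E W = {}" using True by (auto simp: induced_edges_def)
      then show ?thesis using True by simp
    next
      case False
      have sub: "induced_edges E W \<subseteq> insert {x, y} (induced_edges {e\<in>E. x \<notin> e} (W - {x}))"
        using edge_at_leaf[OF g x(2)] unfolding induced_edges_def by auto
      have "W - {x} \<subseteq> V - {x}" "W - {x} \<noteq> {}" using W False True by auto
      then have lt: "card (induced_edges {e\<in>E. x \<notin> e} (W - {x})) < card (W - {x})"
        using forest' unfolding forest_def by auto
      have fin: "finite (induced_edges {e\<in>E. x \<notin> e} (W - {x}))"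
        using graph_finite_edges[OF g] unfolding induced_edges_def by auto
      have "card (induced_edges E W) \<le> card (insert {x, y} (induced_edges {e\<in>E. x \<notin> e} (W - {x})))"
        using fin sub by (intro card_mono) auto
      also have "\<dots> \<le> card (induced_edges {e\<in>E. x \<notin> e} (W - {x})) + 1"
        using fin by (simp add: card_insert_if)
      finally have "card (induced_edges E W) < card (W - {x}) + 1" using lt by linarith
      then show ?thesis using card_Suc_Diff1[OF finW True] by simp
    qed
  qed
qed

lemma tree_is_forest:
  assumes "graph V E" "connected_graph V E" "V \<noteq> {}" "card E + 1 = card V"
  shows "forest V E"
  using assms
proof (induction "card V" arbitrary: V E rule: less_induct)
  case less
  have g: "graph V E" by fact
  have finV: "finite V" using g graph_def by auto
  show ?case
  proof (cases "card V = 1")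
    case True
    then have "E = {}" using less.prems(4) graph_finite_edges[OF g] by simp
    then show ?thesis using finV
      by (auto simp: forest_def induced_edges_def card_gt_0_iff intro: finite_subset)
  next
    case False
    moreover have "card V \<noteq> 0" using less.prems(3) finV by simp
    ultimately have c2: "card V \<ge> 2" by linarith
    obtain x where x: "x \<in> V" "card (nbhd E x) = 1"
      using tree_has_leaf[OF g] connected_no_isolated[OF g less.prems(2) c2] less.prems(4) by blast
    then obtain y where y: "nbhd E x = {y}" by (auto simp: card_1_singleton_iff)
    have xy: "x \<noteq> y" using not_in_nbhd_self[OF g, of x] y by auto
    define E' where "E' = {e\<in>E. x \<notin> e}"
    have "E = insert {x, y} E'"
      using y edge_at_leaf[OF g y] by (auto simp: E'_def nbhd_def insert_commute)
    moreover have "{x, y} \<notin> E'" "finite E'"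
      using graph_finite_edges[OF g] by (auto simp: E'_def)
    ultimately have "card E = card E' + 1" by simp
    moreover have "card V = card (V - {x}) + 1" using card_Suc_Diff1[OF finV x(1)] by simp
    moreover have "graph (V - {x}) E'" using g unfolding graph_def E'_def by auto
    moreover have "connected_graph (V - {x}) E'"
      using less.prems(2) rtranclp_adj_remove_leaf[OF y _ _ _ xy]
      unfolding connected_graph_def E'_def by auto
    moreover have "V - {x} \<noteq> {}" using y nbhd_subset[OF g, of x] xy by auto
    ultimately have "forest (V - {x}) E'" using less.hyps less.prems(4) by simp
    then show ?thesis using forest_insert_leaf[OF g x(1) y] E'_def by simp
  qed
qed

definition leaves_in :: "'a set set \<Rightarrow> 'a set \<Rightarrow> 'a set" where
  "leaves_in E W = {v\<in>W. card (nbhd_in E W v) = 1}"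

definition supports_in :: "'a set set \<Rightarrow> 'a set \<Rightarrow> 'a set" where
  "supports_in E W = {v\<in>W. \<exists>u\<in>nbhd_in E W v. u \<in> leaves_in E W}"

definition no_isolated_in :: "'a set set \<Rightarrow> 'a set \<Rightarrow> bool" where
  "no_isolated_in E W \<longleftrightarrow> (\<forall>v\<in>W. nbhd_in E W v \<noteq> {})"

lemma nbhd_in_subset: "nbhd_in E W v \<subseteq> W"
  by (auto simp: nbhd_in_def)

lemma nbhd_in_commute: "u \<in> nbhd_in E W v \<Longrightarrow> v \<in> W \<Longrightarrow> v \<in> nbhd_in E W u"
  by (auto simp: nbhd_in_def nbhd_def insert_commute)

lemma not_in_nbhd_in_self: "graph V E \<Longrightarrow> v \<notin> nbhd_in E W v"
  using not_in_nbhd_self[of V E v] by (auto simp: nbhd_in_def)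

lemma nbhd_in_Diff: "nbhd_in E (W - X) v = nbhd_in E W v - X"
  by (auto simp: nbhd_in_def)

lemma finite_nbhd_in: "finite W \<Longrightarrow> finite (nbhd_in E W v)"
  by (auto simp: nbhd_in_def)

lemma nbhd_in_leaf_unique: "nbhd_in E W x = {y} \<Longrightarrow> x \<in> nbhd_in E W v \<Longrightarrow> v \<in> W \<Longrightarrow> v = y"
  using nbhd_in_commute by fastforce

lemma leaves_in_subset: "leaves_in E W \<subseteq> W"
  by (auto simp: leaves_in_def)

lemma supports_in_subset: "supports_in E W \<subseteq> W"
  by (auto simp: supports_in_def)

lemma finite_leaves_in: "finite W \<Longrightarrow> finite (leaves_in E W)"
  using finite_subset[OF leaves_in_subset] .

lemma finite_supports_in: "finite W \<Longrightarrow> finite (supports_in E W)"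
  using finite_subset[OF supports_in_subset] .

lemma leaves_in_iff: "x \<in> leaves_in E W \<longleftrightarrow> x \<in> W \<and> (\<exists>y. nbhd_in E W x = {y})"
  by (auto simp: leaves_in_def card_1_singleton_iff)

lemma legal_from_nbhd_in_superset:
  assumes "legal_from (nbhd_in E W') C' S" "W' \<subseteq> W" "C \<subseteq> C' \<union> (W - W')"
  shows "legal_from (nbhd_in E W) C S"
proof (rule legal_from_mono[OF assms(1) _ assms(3)])
  show "\<forall>z\<in>set S. nbhd_in E W' z \<subseteq> nbhd_in E W z \<and> nbhd_in E W z \<subseteq> nbhd_in E W' z \<union> (W - W')
      \<and> nbhd_in E W' z \<inter> (W - W') = {}"
    using assms(2) by (auto simp: nbhd_in_def)
qed

lemma legal_from_wrap_pendant_edge: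
  assumes "legal_from (nbhd_in E (W - X)) {} S" "set S \<subseteq> W - X"
    and "nbhd_in E W x = {y}" "x \<in> W" "x \<noteq> y" "{x, y} \<subseteq> X"
  shows "legal_from (nbhd_in E W) {} (x # S @ [y])"
proof -
  have "y \<in> W" using nbhd_in_subset[of E W x] assms(3) by simp
  then have "legal_from (nbhd_in E W) {y} S"
    using legal_from_nbhd_in_superset[OF assms(1), of W "{y}"] assms(6) by auto
  moreover have "x \<in> nbhd_in E W y"
    using nbhd_in_commute[of y E W x] assms(3,4) by simp
  moreover have "x \<notin> nbhd_in E W z" if "z \<in> set S" for z
    using nbhd_in_leaf_unique[OF assms(3), of z] that assms(2,6) by auto
  ultimately have "legal_from (nbhd_in E W) {y} S"
    "nbhd_in E W y - ({y} \<union> \<Union>(nbhd_in E W ` set S)) \<noteq> {}"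
    using assms(5) by blast+
  then show ?thesis using assms(3) by (simp add: legal_from_append)
qed

lemma forest_low_degree_vertex:
  assumes g: "graph V E" and "forest V E" "I \<subseteq> V" "I \<noteq> {}"
  shows "\<exists>y\<in>I. card (nbhd_in E I y) \<le> 1"
proof (rule ccontr)
  assume none: "\<not> ?thesis"
  have "2 \<le> card (nbhd_in E I v)" if "v \<in> I" for v
  proof -
    have "\<not> card (nbhd_in E I v) \<le> 1" using none that by blast
    then show ?thesis by linarith
  qed
  then have "(\<Sum>v\<in>I. 2) \<le> (\<Sum>v\<in>I. card (nbhd_in E I v))" by (rule sum_mono)
  moreover have "card (induced_edges E I) < card I" using assms unfolding forest_def by blast
  ultimately show False using sum_card_nbhd_in[OF g assms(3)] by simp
qed

text \<open>The support is a vertex of degree at most one in the subforest of non-leaves: having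
  degree at least two, it has a leaf neighbour, and then either two of them or degree two.\<close>
lemma forest_leaf_with_strong_or_low_degree_support:
  assumes g: "graph V E" and "forest V E" "W \<subseteq> V" "W \<noteq> {}" and ni: "no_isolated_in E W"
  shows "\<exists>x y. x \<in> W \<and> nbhd_in E W x = {y} \<and>
    (2 \<le> card {u\<in>nbhd_in E W y. u \<in> leaves_in E W} \<or> card (nbhd_in E W y) \<le> 2)"
proof -
  have finW: "finite W" using g assms(3) unfolding graph_def by (auto intro: finite_subset)
  define I where "I = W - leaves_in E W"
  show ?thesis
  proof (cases "I = {}")
    case True
    obtain x where x: "x \<in> W" using assms(4) by auto
    then have "x \<in> leaves_in E W" using True I_def by blast
    then obtain y where y: "nbhd_in E W x = {y}" unfolding leaves_in_iff by blast
    then have "y \<in> W" using nbhd_in_subset[of E W x] by simp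
    then have "y \<in> leaves_in E W" using True I_def by blast
    then have "card (nbhd_in E W y) \<le> 2" by (simp add: leaves_in_def)
    then show ?thesis using x y by blast
  next
    case False
    then obtain y where yI: "y \<in> I" and cy: "card (nbhd_in E I y) \<le> 1"
      using forest_low_degree_vertex[OF g assms(2), of I] assms(3) I_def by auto
    have finN: "finite (nbhd_in E W y)" by (rule finite_nbhd_in[OF finW])
    have "nbhd_in E W y \<noteq> {}" "card (nbhd_in E W y) \<noteq> 1"
      using yI ni by (auto simp: I_def leaves_in_def no_isolated_in_def)
    moreover have "card (nbhd_in E W y) \<noteq> 0" using finN calculation(1) by simp
    ultimately have c2: "2 \<le> card (nbhd_in E W y)" by linarith
    define A where "A = {u\<in>nbhd_in E W y. u \<in> leaves_in E W}"
    have "nbhd_in E W y = nbhd_in E I y \<union> A"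
      using nbhd_in_subset[of E W y] unfolding A_def I_def nbhd_in_def by blast
    then have split: "card (nbhd_in E W y) \<le> card (nbhd_in E I y) + card A"
      using card_Un_le[of "nbhd_in E I y" A] by simp
    then have "A \<noteq> {}" using cy c2 by (cases "A = {}") simp_all
    then obtain x where xA: "x \<in> A" by blast
    then obtain y' where x: "x \<in> W" "nbhd_in E W x = {y'}" unfolding A_def leaves_in_iff by blast
    have "x \<in> nbhd_in E W y" using xA A_def by blast
    then have "nbhd_in E W x = {y}"
      using x yI nbhd_in_commute[of x E W y] unfolding I_def by auto
    moreover have "2 \<le> card A \<or> card (nbhd_in E W y) \<le> 2" using split cy by linarith
    ultimately show ?thesis using x(1) unfolding A_def by blast
  qed
qed

section \<open>The lower bound\<close>

definition forest_weight :: "'a set set \<Rightarrow> 'a set \<Rightarrow> int" where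
  "forest_weight E W =
     int (card W) + 1 - int (card (leaves_in E W)) + int (card (supports_in E W))"

lemma no_isolated_in_remove_leaf:
  assumes ni: "no_isolated_in E W" and x: "x \<in> W" "nbhd_in E W x = {y}"
    and y: "nbhd_in E W y \<noteq> {x}"
  shows "no_isolated_in E (W - {x})"
  unfolding no_isolated_in_def nbhd_in_Diff
proof
  fix v assume v: "v \<in> W - {x}"
  show "nbhd_in E W v - {x} \<noteq> {}"
  proof (cases "v = y")
    case True
    have "x \<in> nbhd_in E W y" using nbhd_in_commute[of y E W x] x by simp
    then show ?thesis using True y by blast
  next
    case False
    then have "x \<notin> nbhd_in E W v" using nbhd_in_leaf_unique[OF x(2), of v] v by blast
    then show ?thesis using ni v by (simp add: no_isolated_in_def)
  qed
qed

lemma no_isolated_in_remove_pendant_edge: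
  assumes ni: "no_isolated_in E W" and x: "x \<in> W" "nbhd_in E W x = {y}"
    and only: "\<forall>u\<in>nbhd_in E W y. u \<in> leaves_in E W \<longrightarrow> u = x"
  shows "no_isolated_in E (W - {x, y})"
  unfolding no_isolated_in_def nbhd_in_Diff
proof
  fix v assume v: "v \<in> W - {x, y}"
  then have xv: "x \<notin> nbhd_in E W v" using nbhd_in_leaf_unique[OF x(2), of v] by blast
  show "nbhd_in E W v - {x, y} \<noteq> {}"
  proof
    assume empty: "nbhd_in E W v - {x, y} = {}"
    show False
    proof (cases "y \<in> nbhd_in E W v")
      case True
      then have "nbhd_in E W v = {y}" using empty xv by blast
      then have "v \<in> leaves_in E W" using v by (simp add: leaves_in_def)
      moreover have "v \<in> nbhd_in E W y" using nbhd_in_commute[OF True] v by blast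
      ultimately show False using only v by blast
    next
      case False
      then show False using empty xv ni v by (auto simp: no_isolated_in_def)
    qed
  qed
qed

lemma leaves_in_remove_pendant_edge:
  assumes x: "nbhd_in E W x = {y}"
  shows "leaves_in E (W - {x, y}) \<subseteq> (leaves_in E W - {x, y}) \<union> (nbhd_in E W y - {x})"
proof
  fix v assume v: "v \<in> leaves_in E (W - {x, y})"
  then have vW: "v \<in> W" "v \<noteq> x" "v \<noteq> y" and cv: "card (nbhd_in E W v - {x, y}) = 1"
    by (auto simp: leaves_in_def nbhd_in_Diff)
  show "v \<in> (leaves_in E W - {x, y}) \<union> (nbhd_in E W y - {x})"
  proof (cases "y \<in> nbhd_in E W v")
    case True
    then show ?thesis using nbhd_in_commute[OF True vW(1)] vW by blast
  next
    case False
    moreover have "x \<notin> nbhd_in E W v" using nbhd_in_leaf_unique[OF x, of v] vW by blast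
    ultimately have "nbhd_in E W v - {x, y} = nbhd_in E W v" by blast
    then show ?thesis using cv vW by (simp add: leaves_in_def)
  qed
qed

lemma supports_in_remove_pendant_edge:
  assumes x: "nbhd_in E W x = {y}" and xW: "x \<in> W"
    and only: "\<forall>u\<in>nbhd_in E W y. u \<in> leaves_in E W \<longrightarrow> u = x"
  shows "supports_in E W - {x, y} \<subseteq> supports_in E (W - {x, y})"
proof
  fix s assume "s \<in> supports_in E W - {x, y}"
  then obtain u where u: "u \<in> nbhd_in E W s" "u \<in> leaves_in E W" and s: "s \<in> W" "s \<noteq> x" "s \<noteq> y"
    unfolding supports_in_def by blast
  have uW: "u \<in> W" using subsetD[OF leaves_in_subset u(2)] .
  have us: "s \<in> nbhd_in E W u" using nbhd_in_commute[OF u(1) s(1)] .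
  have ux: "u \<noteq> x" using u(1) s nbhd_in_leaf_unique[OF x, of s] by blast
  have uy: "u \<noteq> y"
  proof
    assume "u = y"
    then obtain t where "nbhd_in E W y = {t}" using u(2) unfolding leaves_in_iff by blast
    moreover have "x \<in> nbhd_in E W y" using nbhd_in_commute[of y E W x] x xW by simp
    ultimately show False using us \<open>u = y\<close> s(2) by simp
  qed
  have "y \<notin> nbhd_in E W u"
  proof
    assume "y \<in> nbhd_in E W u"
    then have "u \<in> nbhd_in E W y" using nbhd_in_commute uW by metis
    then show False using only u(2) ux by blast
  qed
  moreover have "x \<notin> nbhd_in E W u" using nbhd_in_leaf_unique[OF x, of u] uW uy by blast
  ultimately have "nbhd_in E (W - {x, y}) u = nbhd_in E W u" by (auto simp: nbhd_in_Diff)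
  then have "u \<in> leaves_in E (W - {x, y})" using u(2) uW ux uy by (simp add: leaves_in_def)
  then show "s \<in> supports_in E (W - {x, y})"
    using u(1) s ux uy by (auto simp: supports_in_def nbhd_in_Diff)
qed

lemma card_Diff_pair:
  assumes "finite A" "x \<in> A" "y \<in> A" "x \<noteq> y"
  shows "card A = card (A - {x, y}) + 2"
proof -
  have "card {x, y} \<le> card A" using assms by (intro card_mono) auto
  then show ?thesis using assms by (simp add: card_Diff_subset)
qed

lemma card_le_card_Diff_pair: "card A \<le> card (A - {x, y}) + 2"
proof -
  have "card {x, y} \<le> 2" by (cases "x = y") simp_all
  moreover have "card A - card {x, y} \<le> card (A - {x, y})" by (rule diff_card_le_card_Diff) simp
  ultimately show ?thesis by linarith
qed

lemma forest_weight_remove_isolated_edge: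
  assumes finW: "finite W" and x: "x \<in> W" "nbhd_in E W x = {y}" and y: "nbhd_in E W y = {x}"
    and xy: "x \<noteq> y"
  shows "forest_weight E W \<le> forest_weight E (W - {x, y}) + 2"
proof -
  have yW: "y \<in> W" using nbhd_in_subset[of E W x] x(2) by simp
  have L: "leaves_in E (W - {x, y}) \<subseteq> leaves_in E W - {x, y}"
    using leaves_in_remove_pendant_edge[OF x(2)] y by blast
  have finL: "finite (leaves_in E W)" using finite_leaves_in[OF finW] .
  have "x \<in> leaves_in E W" "y \<in> leaves_in E W" using x y yW by (auto simp: leaves_in_def)
  then have "card (leaves_in E W) = card (leaves_in E W - {x, y}) + 2"
    using card_Diff_pair[OF finL _ _ xy] by blast
  moreover have "card (leaves_in E (W - {x, y})) \<le> card (leaves_in E W - {x, y})"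
    using L finL by (intro card_mono) auto
  moreover have S: "supports_in E W - {x, y} \<subseteq> supports_in E (W - {x, y})"
    using supports_in_remove_pendant_edge[OF x(2) x(1)] y by blast
  have "card (supports_in E W - {x, y}) \<le> card (supports_in E (W - {x, y}))"
    using S finite_supports_in[of "W - {x, y}" E] finW by (intro card_mono) auto
  then have "card (supports_in E W) \<le> card (supports_in E (W - {x, y})) + 2"
    using card_le_card_Diff_pair[of "supports_in E W" x y] by linarith
  moreover have "card W = card (W - {x, y}) + 2" using card_Diff_pair[OF finW x(1) yW xy] .
  ultimately show ?thesis unfolding forest_weight_def by linarith
qed

lemma forest_weight_remove_pendant_edge:
  assumes finW: "finite W" and x: "x \<in> W" "nbhd_in E W x = {y}" and xy: "x \<noteq> y"
    and only: "\<forall>u\<in>nbhd_in E W y. u \<in> leaves_in E W \<longrightarrow> u = x"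
    and deg: "card (nbhd_in E W y) \<le> 2"
  shows "forest_weight E W \<le> forest_weight E (W - {x, y}) + 3"
proof -
  have yW: "y \<in> W" using nbhd_in_subset[of E W x] x(2) by simp
  have yx: "x \<in> nbhd_in E W y" using nbhd_in_commute[of y E W x] x by simp
  show ?thesis
  proof (cases "y \<in> leaves_in E W")
    case True
    then have "nbhd_in E W y = {x}" using yx unfolding leaves_in_iff by auto
    from forest_weight_remove_isolated_edge[OF finW x this xy] show ?thesis by linarith
  next
    case False
    have finL: "finite (leaves_in E W)" using finite_leaves_in[OF finW] .
    have finS: "finite (supports_in E W)" using finite_supports_in[OF finW] .
    have finW': "finite (W - {x, y})" using finW by simp
    have xL: "x \<in> leaves_in E W" using x by (simp add: leaves_in_def)
    have "x \<notin> supports_in E W" using x(2) False by (simp add: supports_in_def)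
    moreover have yS: "y \<in> supports_in E W" using yW yx xL by (auto simp: supports_in_def)
    ultimately have "supports_in E W - {x, y} = supports_in E W - {y}" by blast
    then have "supports_in E W - {y} \<subseteq> supports_in E (W - {x, y})"
      using supports_in_remove_pendant_edge[OF x(2) x(1) only] by simp
    then have "card (supports_in E W - {y}) \<le> card (supports_in E (W - {x, y}))"
      using finite_supports_in[OF finW'] by (intro card_mono)
    then have S: "card (supports_in E W) \<le> card (supports_in E (W - {x, y})) + 1"
      using card_Suc_Diff1[OF finS yS] by linarith
    have "card (nbhd_in E W y - {x}) \<le> 1"
      using deg card_Diff_singleton[OF yx] by simp
    moreover have L: "leaves_in E (W - {x, y}) \<subseteq> (leaves_in E W - {x}) \<union> (nbhd_in E W y - {x})"
      using leaves_in_remove_pendant_edge[OF x(2)] by blast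
    have "card (leaves_in E (W - {x, y})) \<le> card ((leaves_in E W - {x}) \<union> (nbhd_in E W y - {x}))"
      using L finL finite_nbhd_in[OF finW, of E y] by (intro card_mono) auto
    then have "card (leaves_in E (W - {x, y}))
        \<le> card (leaves_in E W - {x}) + card (nbhd_in E W y - {x})"
      using card_Un_le[of "leaves_in E W - {x}" "nbhd_in E W y - {x}"] by linarith
    moreover have "card (leaves_in E W - {x}) + 1 = card (leaves_in E W)"
      using card_Suc_Diff1[OF finL xL] by simp
    ultimately have "card (leaves_in E (W - {x, y})) \<le> card (leaves_in E W)" by linarith
    moreover have "card W = card (W - {x, y}) + 2" using card_Diff_pair[OF finW x(1) yW xy] .
    ultimately show ?thesis using S unfolding forest_weight_def by linarith
  qed
qed

lemma leaves_in_remove_leaf: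
  assumes "nbhd_in E W x = {y}"
  shows "leaves_in E (W - {x}) \<subseteq> insert y (leaves_in E W - {x})"
proof
  fix v assume v: "v \<in> leaves_in E (W - {x})"
  then have vW: "v \<in> W" "v \<noteq> x" using subsetD[OF leaves_in_subset v] by auto
  show "v \<in> insert y (leaves_in E W - {x})"
  proof (cases "v = y")
    case False
    then have "nbhd_in E (W - {x}) v = nbhd_in E W v"
      using nbhd_in_leaf_unique[OF assms, of v] vW by (auto simp: nbhd_in_Diff)
    then show ?thesis using v vW by (simp add: leaves_in_def)
  qed simp
qed

lemma supports_in_remove_twin_leaf:
  assumes x: "x \<in> W" "nbhd_in E W x = {y}"
    and twin: "x' \<in> nbhd_in E W y" "x' \<in> leaves_in E W" "x' \<noteq> x"
  shows "supports_in E W \<subseteq> supports_in E (W - {x})"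
proof
  fix s assume "s \<in> supports_in E W"
  then obtain u where u: "u \<in> nbhd_in E W s" "u \<in> leaves_in E W" and sW: "s \<in> W"
    unfolding supports_in_def by blast
  have yW: "y \<in> W" using nbhd_in_subset[of E W x] x(2) by simp
  have x'W: "x' \<in> W" using subsetD[OF leaves_in_subset twin(2)] .
  have yx: "x \<in> nbhd_in E W y" using nbhd_in_commute[of y E W x] x by simp
  have xy: "x \<noteq> y" using twin x(2) nbhd_in_leaf_unique[OF x(2), of x'] x'W by auto
  have yL: "y \<notin> leaves_in E W" using yx twin by (auto simp: leaves_in_iff)
  have sx: "s \<noteq> x" using u x(2) yL nbhd_in_commute[OF u(1) sW] by auto
  show "s \<in> supports_in E (W - {x})"
  proof (cases "u = x")
    case True
    then have "s = y" using nbhd_in_leaf_unique[OF x(2) _ sW] u(1) by simp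
    have "nbhd_in E W x' = {y}"
      using twin(2) nbhd_in_commute[OF twin(1) yW] unfolding leaves_in_iff by auto
    then have "x' \<in> leaves_in E (W - {x})"
      using x'W twin(3) xy by (simp add: leaves_in_def nbhd_in_Diff)
    then show ?thesis using \<open>s = y\<close> twin(1,3) yW xy by (auto simp: supports_in_def nbhd_in_Diff)
  next
    case False
    have uW: "u \<in> W" using subsetD[OF leaves_in_subset u(2)] .
    have "u \<noteq> y" using u yL by auto
    then have "nbhd_in E (W - {x}) u = nbhd_in E W u"
      using nbhd_in_leaf_unique[OF x(2), of u] uW by (auto simp: nbhd_in_Diff)
    then have "u \<in> leaves_in E (W - {x})" using u(2) uW False by (simp add: leaves_in_def)
    then show ?thesis using u(1) sx sW False by (auto simp: supports_in_def nbhd_in_Diff)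
  qed
qed

lemma forest_weight_remove_twin_leaf:
  assumes finW: "finite W" and x: "x \<in> W" "nbhd_in E W x = {y}"
    and twin: "x' \<in> nbhd_in E W y" "x' \<in> leaves_in E W" "x' \<noteq> x"
  shows "forest_weight E W \<le> forest_weight E (W - {x})"
proof -
  define W' where "W' = W - {x}"
  have finL: "finite (leaves_in E W)" using finite_leaves_in[OF finW] .
  have finS': "finite (supports_in E W')" using finite_supports_in[of W' E] finW W'_def by simp
  have yW: "y \<in> W" using nbhd_in_subset[of E W x] x(2) by simp
  have x'W: "x' \<in> W" using subsetD[OF leaves_in_subset twin(2)] .
  have xy: "x \<noteq> y" using twin x(2) nbhd_in_leaf_unique[OF x(2), of x'] x'W by auto
  have xL: "x \<in> leaves_in E W" using x by (simp add: leaves_in_def)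
  note L = leaves_in_remove_leaf[OF x(2), folded W'_def]
  note S = supports_in_remove_twin_leaf[OF x twin, folded W'_def]
  have "int (card (leaves_in E W')) - int (card (supports_in E W'))
      \<le> int (card (leaves_in E W)) - int (card (supports_in E W)) - 1"
  proof (cases "y \<in> leaves_in E W'")
    case True
    have "y \<in> nbhd_in E W' x'"
      using nbhd_in_commute[OF twin(1) yW] xy W'_def by (simp add: nbhd_in_Diff)
    then have "x' \<in> supports_in E W'"
      using True x'W twin(3) W'_def unfolding supports_in_def by blast
    moreover have "x' \<notin> supports_in E W"
    proof -
      have "x \<in> nbhd_in E W y" using nbhd_in_commute[of y E W x] x by simp
      then have "y \<notin> leaves_in E W" using twin(1,3) by (auto simp: leaves_in_iff)
      moreover have "nbhd_in E W x' = {y}"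
        using twin(2) nbhd_in_commute[OF twin(1) yW] unfolding leaves_in_iff by auto
      ultimately show ?thesis by (simp add: supports_in_def)
    qed
    ultimately have "card (insert x' (supports_in E W)) \<le> card (supports_in E W')"
      using S finS' by (intro card_mono) auto
    then have S1: "card (supports_in E W) + 1 \<le> card (supports_in E W')"
      using \<open>x' \<notin> supports_in E W\<close> finite_subset[OF S finS'] by simp
    have "card (leaves_in E W') \<le> card (insert y (leaves_in E W - {x}))"
      using L finL by (intro card_mono) auto
    also have "\<dots> \<le> card (leaves_in E W - {x}) + 1" using finL by (simp add: card_insert_if)
    also have "\<dots> = card (leaves_in E W)" using card_Suc_Diff1[OF finL xL] by simp
    finally have "card (leaves_in E W') \<le> card (leaves_in E W)" .
    with S1 show ?thesis by linarith
  next
    case False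
    then have "card (leaves_in E W') \<le> card (leaves_in E W - {x})"
      using L finL by (intro card_mono) auto
    then have "card (leaves_in E W') + 1 \<le> card (leaves_in E W)"
      using card_Suc_Diff1[OF finL xL] by simp
    moreover have "card (supports_in E W) \<le> card (supports_in E W')"
      using S finS' by (intro card_mono)
    ultimately show ?thesis by linarith
  qed
  moreover have "card W = card W' + 1" using card_Suc_Diff1[OF finW x(1)] W'_def by simp
  ultimately show ?thesis unfolding forest_weight_def W'_def by linarith
qed

lemma forest_legal_lower_bound:
  assumes g: "graph V E" and f: "forest V E"
  shows "W \<subseteq> V \<Longrightarrow> W \<noteq> {} \<Longrightarrow> no_isolated_in E W \<Longrightarrow>
    \<exists>S. set S \<subseteq> W \<and> legal_from (nbhd_in E W) {} S \<and> 2 * forest_weight E W \<le> 3 * int (length S)"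
proof (induction "card W" arbitrary: W rule: less_induct)
  case less
  have finW: "finite W" using g less.prems(1) unfolding graph_def by (auto intro: finite_subset)
  obtain x y where x: "x \<in> W" "nbhd_in E W x = {y}"
    and strong_or_low: "2 \<le> card {u\<in>nbhd_in E W y. u \<in> leaves_in E W} \<or> card (nbhd_in E W y) \<le> 2"
    using forest_leaf_with_strong_or_low_degree_support[OF g f less.prems] by blast
  have yW: "y \<in> W" using nbhd_in_subset[of E W x] x(2) by simp
  have xy: "x \<noteq> y" using not_in_nbhd_in_self[OF g, of x W] x(2) by auto
  have yx: "x \<in> nbhd_in E W y" using nbhd_in_commute[of y E W x] x by simp
  show ?case
  proof (cases "\<exists>x'\<in>nbhd_in E W y. x' \<in> leaves_in E W \<and> x' \<noteq> x")
    case True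
    then obtain x' where twin: "x' \<in> nbhd_in E W y" "x' \<in> leaves_in E W" "x' \<noteq> x" by blast
    have "no_isolated_in E (W - {x})"
      using no_isolated_in_remove_leaf[OF less.prems(3) x] twin(1,3) by blast
    moreover have "W - {x} \<noteq> {}" "W - {x} \<subseteq> V" using yW xy less.prems(1) by auto
    moreover have "card (W - {x}) < card W" using card_Diff1_less[OF finW x(1)] .
    ultimately obtain S where S: "set S \<subseteq> W - {x}" "legal_from (nbhd_in E (W - {x})) {} S"
      and bound: "2 * forest_weight E (W - {x}) \<le> 3 * int (length S)"
      using less.hyps by blast
    have "legal_from (nbhd_in E W) {} S" using legal_from_nbhd_in_superset[OF S(2)] by simp
    moreover have "forest_weight E W \<le> forest_weight E (W - {x})"
      using forest_weight_remove_twin_leaf[OF finW x twin] .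
    ultimately show ?thesis using S(1) bound by (intro exI[of _ S]) auto
  next
    case False
    then have only: "\<forall>u\<in>nbhd_in E W y. u \<in> leaves_in E W \<longrightarrow> u = x" by blast
    then have "{u\<in>nbhd_in E W y. u \<in> leaves_in E W} \<subseteq> {x}" by blast
    then have "card {u\<in>nbhd_in E W y. u \<in> leaves_in E W} \<le> 1"
      using card_mono[of "{x}"] by fastforce
    then have deg: "card (nbhd_in E W y) \<le> 2" using strong_or_low by linarith
    show ?thesis
    proof (cases "W - {x, y} = {}")
      case True
      then have "nbhd_in E W y = {x}"
        using yx nbhd_in_subset[of E W y] not_in_nbhd_in_self[OF g, of y W] by blast
      then have "forest_weight E W \<le> forest_weight E {} + 2"
        using forest_weight_remove_isolated_edge[OF finW x _ xy] True by simp
      moreover have "forest_weight E {} = 1"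
        by (simp add: forest_weight_def leaves_in_def supports_in_def)
      moreover have "legal_from (nbhd_in E W) {} [x, y]"
        using x(2) yx xy by auto
      ultimately show ?thesis using x(1) yW by (intro exI[of _ "[x, y]"]) auto
    next
      case False
      have "no_isolated_in E (W - {x, y})"
        using no_isolated_in_remove_pendant_edge[OF less.prems(3) x only] .
      moreover have "W - {x, y} \<subseteq> V" using less.prems(1) by auto
      moreover have "card (W - {x, y}) < card W" using card_Diff_pair[OF finW x(1) yW xy] by simp
      ultimately obtain S where S: "set S \<subseteq> W - {x, y}" "legal_from (nbhd_in E (W - {x, y})) {} S"
        and bound: "2 * forest_weight E (W - {x, y}) \<le> 3 * int (length S)"
        using less.hyps False by blast
      have "legal_from (nbhd_in E W) {} (x # S @ [y])"
        using legal_from_wrap_pendant_edge[OF S(2,1) x(2,1) xy] by simp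
      moreover have "forest_weight E W \<le> forest_weight E (W - {x, y}) + 3"
        using forest_weight_remove_pendant_edge[OF finW x xy only deg] .
      ultimately show ?thesis using S(1) bound x(1) yW by (intro exI[of _ "x # S @ [y]"]) auto
    qed
  qed
qed

definition no_strong_support_in :: "'a set set \<Rightarrow> 'a set \<Rightarrow> bool" where
  "no_strong_support_in E W \<longleftrightarrow> (\<forall>v\<in>W. card {u\<in>nbhd_in E W v. u \<in> leaves_in E W} < 2)"

lemma card_leaves_in_le_card_supports_in:
  assumes finW: "finite W" and nss: "no_strong_support_in E W"
  shows "card (leaves_in E W) \<le> card (supports_in E W)"
proof -
  define f where "f v = (SOME s. s \<in> nbhd_in E W v)" for v
  have f: "nbhd_in E W v = {f v}" if v: "v \<in> leaves_in E W" for v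
  proof -
    obtain s where "nbhd_in E W v = {s}" using v unfolding leaves_in_iff by blast
    then show ?thesis unfolding f_def by simp
  qed
  have "f ` leaves_in E W \<subseteq> supports_in E W"
  proof
    fix s assume "s \<in> f ` leaves_in E W"
    then obtain v where v: "v \<in> leaves_in E W" "s = f v" by blast
    have vW: "v \<in> W" using subsetD[OF leaves_in_subset v(1)] .
    have sv: "s \<in> nbhd_in E W v" using f[OF v(1)] v(2) by simp
    have "s \<in> W" using subsetD[OF nbhd_in_subset sv] .
    moreover have "v \<in> nbhd_in E W s" using nbhd_in_commute[OF sv vW] .
    ultimately show "s \<in> supports_in E W" using v(1) unfolding supports_in_def by blast
  qed
  moreover have "inj_on f (leaves_in E W)"
  proof (rule inj_onI)
    fix a b assume a: "a \<in> leaves_in E W" and b: "b \<in> leaves_in E W" and ab: "f a = f b"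
    have aW: "a \<in> W" using subsetD[OF leaves_in_subset a] .
    have bW: "b \<in> W" using subsetD[OF leaves_in_subset b] .
    have sW: "f a \<in> W" using f[OF a] nbhd_in_subset[of E W a] by simp
    have "a \<in> nbhd_in E W (f a)" "b \<in> nbhd_in E W (f a)"
      using nbhd_in_commute[of "f a" E W a] nbhd_in_commute[of "f a" E W b] f[OF a] f[OF b] ab aW bW
      by auto
    then have "{a, b} \<subseteq> {u\<in>nbhd_in E W (f a). u \<in> leaves_in E W}" using a b by auto
    then have "card {a, b} \<le> card {u\<in>nbhd_in E W (f a). u \<in> leaves_in E W}"
      using finite_nbhd_in[OF finW] by (intro card_mono) auto
    then have "card {a, b} < 2" using nss sW unfolding no_strong_support_in_def by fastforce
    then show "a = b" by (cases "a = b") auto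
  qed
  ultimately show ?thesis using card_inj_on_le finite_supports_in[OF finW] by blast
qed

definition vertex_cover :: "'a set \<Rightarrow> 'a set set \<Rightarrow> 'a set \<Rightarrow> bool" where
  "vertex_cover V E J \<longleftrightarrow> J \<subseteq> V \<and> (\<forall>x\<in>V - J. nbhd E x \<subseteq> J)"

lemma legal_length_le_vertex_cover:
  assumes "finite J" "vertex_cover V E J" "set S \<subseteq> V" "legal_from (nbhd E) {} S"
  shows "length S \<le> 2 * card J"
proof -
  obtain f where f: "inj_on f (set S)" "\<forall>z\<in>set S. f z \<in> nbhd E z"
    using legal_from_private_neighbours[OF assms(4)] by blast
  have "f ` (set S - J) \<subseteq> J" using f(2) assms(2,3) unfolding vertex_cover_def by blast
  moreover have "inj_on f (set S - J)" using f(1) by (rule inj_on_subset) auto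
  ultimately have "card (set S - J) \<le> card J" using card_inj_on_le assms(1) by blast
  moreover have "card (set S) \<le> card (set S - J) + card J"
    using card_Un_le[of "set S - J" J] card_mono[of "(set S - J) \<union> J" "set S"] assms(1) by auto
  moreover have "length S = card (set S)"
    using legal_from_distinct[OF assms(4)] by (simp add: distinct_card)
  ultimately show ?thesis by linarith
qed

section \<open>Trees of the family\<close>

lemma in_family_T_finite: "in_family_T V E \<Longrightarrow> finite V \<and> (\<forall>e\<in>E. e \<subseteq> V)"
  by (induction rule: in_family_T.induct) auto

lemma nbhd_attach_path:
  assumes "\<forall>e\<in>E. e \<subseteq> V" "v \<in> V" "v1 \<notin> V" "v2 \<notin> V" "v3 \<notin> V" "v1 \<noteq> v2" "v1 \<noteq> v3" "v2 \<noteq> v3"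
  defines "E' \<equiv> E \<union> {{v, v1}, {v1, v2}, {v2, v3}}"
  shows "a \<in> V \<Longrightarrow> a \<noteq> v \<Longrightarrow> nbhd E' a = nbhd E a"
    and "nbhd E' v = insert v1 (nbhd E v)"
    and "nbhd E' v1 = {v, v2}" and "nbhd E' v2 = {v1, v3}" and "nbhd E' v3 = {v2}"
  using assms unfolding nbhd_def by (auto simp: doubleton_eq_iff)

lemma support_vertex_attach_path:
  assumes "finite V" and fin: "\<forall>e\<in>E. e \<subseteq> V"
    and new: "v \<in> V" "v1 \<notin> V" "v2 \<notin> V" "v3 \<notin> V" "v1 \<noteq> v2" "v1 \<noteq> v3" "v2 \<noteq> v3"
    and v: "nbhd E v \<noteq> {}"
    and w: "support_vertex (E \<union> {{v, v1}, {v1, v2}, {v2, v3}}) w"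
  shows "w = v2 \<or> w = v \<or> (w \<in> V \<and> (\<exists>u\<in>nbhd E w. leaf E u \<and> u \<noteq> v))"
proof -
  let ?E' = "E \<union> {{v, v1}, {v1, v2}, {v2, v3}}"
  note nb = nbhd_attach_path[OF fin new]
  have nbV: "nbhd E a \<subseteq> V" for a using fin by (auto simp: nbhd_def)
  obtain u where u: "u \<in> nbhd ?E' w" "leaf ?E' u" using w by (auto simp: support_vertex_def)
  have wu: "w \<in> nbhd ?E' u" using u(1) nbhd_commute by metis
  show ?thesis
  proof (cases "u \<in> V \<and> u \<noteq> v")
    case True
    then have eq: "nbhd ?E' u = nbhd E u" using nb(1) by blast
    then have "w \<in> nbhd E u" using wu by simp
    then have "w \<in> V" "u \<in> nbhd E w" using nbV nbhd_commute by (blast, metis)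
    moreover have "leaf E u" using u(2) eq by (simp add: leaf_def)
    ultimately show ?thesis using True by blast
  next
    case False
    have "\<not> leaf ?E' v"
    proof -
      obtain t where t: "t \<in> nbhd E v" using v by blast
      then have "t \<noteq> v1" using nbV new by blast
      then have "card {v1, t} \<le> card (nbhd ?E' v)"
        using t nb(2) finite_subset[OF nbV \<open>finite V\<close>] by (intro card_mono) auto
      then show ?thesis using \<open>t \<noteq> v1\<close> by (simp add: leaf_def)
    qed
    moreover have "{u, w} \<in> ?E'" using u(1) by (simp add: nbhd_def)
    then have "u \<in> V \<union> {v1, v2, v3}" using fin new(1) by auto
    moreover have "v \<noteq> v2" using new by blast
    then have "\<not> leaf ?E' v1" "\<not> leaf ?E' v2"
      using nb(3,4) new(6) by (simp_all add: leaf_def)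
    ultimately have "u = v3" using False u(2) by blast
    then show ?thesis using wu nb(5) by simp
  qed
qed

text \<open>A cover containing every support vertex survives \<open>\<O>\<^sub>1\<close>, which attaches at a support
  vertex; \<open>P\<^sub>2\<close> is a separate case, as no cover of size one contains both of its supports.\<close>
definition family_invariant :: "'a set \<Rightarrow> 'a set set \<Rightarrow> bool" where
  "family_invariant V E \<longleftrightarrow> (\<exists>a b. a \<noteq> b \<and> V = {a, b} \<and> E = {{a, b}}) \<or>
     (\<exists>J. vertex_cover V E J \<and> 3 * card J = card V + 1 \<and> {w\<in>V. support_vertex E w} \<subseteq> J)"

lemma family_invariant_attach_path:
  assumes fb: "finite V" "\<forall>e\<in>E. e \<subseteq> V"
    and new: "v \<in> V" "v1 \<notin> V" "v2 \<notin> V" "v3 \<notin> V" "v1 \<noteq> v2" "v1 \<noteq> v3" "v2 \<noteq> v3"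
    and v: "nbhd E v \<noteq> {}"
    and J: "vertex_cover V E J" "3 * card J = card V + 1" "v \<in> J"
      "\<forall>w\<in>V. (\<exists>u\<in>nbhd E w. leaf E u \<and> u \<noteq> v) \<longrightarrow> w \<in> J"
  shows "family_invariant (V \<union> {v1, v2, v3}) (E \<union> {{v, v1}, {v1, v2}, {v2, v3}})"
proof -
  let ?V' = "V \<union> {v1, v2, v3}" and ?E' = "E \<union> {{v, v1}, {v1, v2}, {v2, v3}}"
  note nb = nbhd_attach_path[OF fb(2) new]
  have JV: "J \<subseteq> V" using J(1) by (simp add: vertex_cover_def)
  have "vertex_cover ?V' ?E' (insert v2 J)"
    unfolding vertex_cover_def
  proof (intro conjI ballI)
    fix x assume x: "x \<in> ?V' - insert v2 J"
    show "nbhd ?E' x \<subseteq> insert v2 J"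
    proof (cases "x \<in> V")
      case True
      then have "x \<noteq> v" using x J(3) by blast
      then show ?thesis using nb(1) True x J(1) by (auto simp: vertex_cover_def)
    next
      case False
      then have "x = v1 \<or> x = v3" using x by blast
      then show ?thesis using nb(3,5) J(3) by auto
    qed
  qed (use JV in blast)
  moreover have "3 * card (insert v2 J) = card ?V' + 1"
    using J(2) new fb(1) finite_subset[OF JV fb(1)] JV by (auto simp: card_insert_if)
  moreover have "{w\<in>?V'. support_vertex ?E' w} \<subseteq> insert v2 J"
    using support_vertex_attach_path[OF fb new v] J(3,4) by blast
  ultimately show ?thesis unfolding family_invariant_def by blast
qed

lemma in_family_T_invariant: "in_family_T V E \<Longrightarrow> family_invariant V E"
proof (induction rule: in_family_T.induct)
  case (P2 a b)
  then show ?case unfolding family_invariant_def by blast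
next
  case (O1 V E v v1 v2 v3)
  have fb: "finite V" "\<forall>e\<in>E. e \<subseteq> V" using in_family_T_finite[OF O1.hyps(1)] by auto
  obtain u where u: "u \<in> nbhd E v" "leaf E u" using O1.hyps(3) by (auto simp: support_vertex_def)
  from O1.IH[unfolded family_invariant_def] show ?case
  proof (elim disjE exE conjE)
    fix a b assume ab: "a \<noteq> b" "V = {a, b}" "E = {{a, b}}"
    have "vertex_cover V E {v}" "\<forall>w\<in>V. (\<exists>u\<in>nbhd E w. leaf E u \<and> u \<noteq> v) \<longrightarrow> w \<in> {v}"
      using ab O1.hyps(2) by (auto simp: vertex_cover_def nbhd_def doubleton_eq_iff)
    moreover have "3 * card {v} = card V + 1" using ab by simp
    ultimately show ?thesis
      using family_invariant_attach_path[OF fb O1.hyps(2,4-9)] u(1)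
      unfolding family_invariant_def by blast
  next
    fix J assume J: "vertex_cover V E J" "3 * card J = card V + 1" "{w\<in>V. support_vertex E w} \<subseteq> J"
    then have "v \<in> J" "\<forall>w\<in>V. (\<exists>u\<in>nbhd E w. leaf E u \<and> u \<noteq> v) \<longrightarrow> w \<in> J"
      using O1.hyps(2,3) by (auto simp: support_vertex_def)
    then show ?thesis
      using family_invariant_attach_path[OF fb O1.hyps(2,4-9) _ J(1,2)] u(1)
      unfolding family_invariant_def by blast
  qed
qed

lemma in_family_T_legal_upper_bound:
  assumes "in_family_T V E" "set S \<subseteq> V" "legal_from (nbhd E) {} S"
  shows "3 * length S \<le> 2 * (card V + 1)"
proof -
  have "\<exists>J. vertex_cover V E J \<and> 3 * card J = card V + 1"
    using in_family_T_invariant[OF assms(1)] unfolding family_invariant_def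
  proof (elim disjE exE conjE)
    fix a b assume ab: "a \<noteq> b" "V = {a, b}" "E = {{a, b}}"
    then have "vertex_cover V E {a} \<and> 3 * card {a} = card V + 1"
      by (auto simp: vertex_cover_def nbhd_def doubleton_eq_iff)
    then show ?thesis by blast
  qed blast
  then obtain J where J: "vertex_cover V E J" "3 * card J = card V + 1" by blast
  have "finite J" using J(1) in_family_T_finite[OF assms(1)] finite_subset
    unfolding vertex_cover_def by blast
  then have "3 * length S \<le> 2 * (3 * card J)"
    using legal_length_le_vertex_cover[OF \<open>finite J\<close> J(1) assms(2,3)] by linarith
  then show ?thesis using J(2) by simp
qed

section \<open>Extremal forests\<close>

definition extremal_in :: "'a set set \<Rightarrow> 'a set \<Rightarrow> bool" where
  "extremal_in E W \<longleftrightarrow>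
     (\<forall>S. set S \<subseteq> W \<and> legal_from (nbhd_in E W) {} S \<longrightarrow> 3 * length S \<le> 2 * (card W + 1))"

lemma extremal_in_wrap_bound:
  assumes ext: "extremal_in E W" and x: "x \<in> W" "nbhd_in E W x = {y}" "x \<noteq> y"
    and X: "{x, y} \<subseteq> X" and S: "set S \<subseteq> W - X" "legal_from (nbhd_in E (W - X)) {} S"
  shows "3 * length S + 6 \<le> 2 * (card W + 1)"
proof -
  have "legal_from (nbhd_in E W) {} (x # S @ [y])"
    using legal_from_wrap_pendant_edge[OF S(2,1) x(2,1,3) X] .
  moreover have "set (x # S @ [y]) \<subseteq> W"
    using S(1) x(1) subsetD[OF nbhd_in_subset, of y E W x] x(2) by auto
  ultimately show ?thesis using ext unfolding extremal_in_def by fastforce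
qed

lemma extremal_in_remove_pendant_path:
  assumes ext: "extremal_in E W" and x: "x \<in> W" "nbhd_in E W x = {y}" "x \<noteq> y"
    and X: "{x, y} \<subseteq> X" "X \<subseteq> W" "card X = 3" and finW: "finite W"
  shows "extremal_in E (W - X)"
  unfolding extremal_in_def
proof (intro allI impI, elim conjE)
  fix S assume S: "set S \<subseteq> W - X" "legal_from (nbhd_in E (W - X)) {} S"
  have "card W = card (W - X) + 3"
    using card_Diff_subset[OF finite_subset[OF X(2) finW] X(2)] card_mono[OF finW X(2)] X(3) by simp
  then show "3 * length S \<le> 2 * (card (W - X) + 1)"
    using extremal_in_wrap_bound[OF ext x X(1) S] by simp
qed

lemma extremal_in_remove_pendant_edge:
  assumes g: "graph V E" and f: "forest V E" and W: "W \<subseteq> V"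
    and ext: "extremal_in E W" and ni: "no_isolated_in E W"
    and x: "x \<in> W" "nbhd_in E W x = {y}" "x \<noteq> y"
    and only: "\<forall>u\<in>nbhd_in E W y. u \<in> leaves_in E W \<longrightarrow> u = x"
    and ne: "W - {x, y} \<noteq> {}"
  shows "card (supports_in E (W - {x, y})) < card (leaves_in E (W - {x, y}))"
proof -
  have finW: "finite W" using g W unfolding graph_def by (auto intro: finite_subset)
  have yW: "y \<in> W" using nbhd_in_subset[of E W x] x(2) by simp
  have "no_isolated_in E (W - {x, y})"
    using no_isolated_in_remove_pendant_edge[OF ni x(1,2) only] .
  then obtain S where S: "set S \<subseteq> W - {x, y}" "legal_from (nbhd_in E (W - {x, y})) {} S"
    and bound: "2 * forest_weight E (W - {x, y}) \<le> 3 * int (length S)"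
    using forest_legal_lower_bound[OF g f _ ne] W by blast
  have "3 * length S \<le> 2 * card (W - {x, y})"
    using extremal_in_wrap_bound[OF ext x _ S] card_Diff_pair[OF finW x(1) yW x(3)] by simp
  then have "int (3 * length S) \<le> int (2 * card (W - {x, y}))" by (simp only: of_nat_le_iff)
  then show ?thesis using bound unfolding forest_weight_def by simp
qed

lemma extremal_in_isolated_edge:
  assumes g: "graph V E" and f: "forest V E" and W: "W \<subseteq> V"
    and ext: "extremal_in E W" and ni: "no_isolated_in E W" and nss: "no_strong_support_in E W"
    and x: "x \<in> W" "nbhd_in E W x = {y}" "x \<noteq> y" and y: "nbhd_in E W y = {x}"
  shows "W = {x, y}"
proof (rule ccontr)
  assume "W \<noteq> {x, y}"
  moreover have yW: "y \<in> W" using nbhd_in_subset[of E W x] x(2) by simp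
  ultimately have ne: "W - {x, y} \<noteq> {}" using x(1) by blast
  have finW: "finite W" using g W unfolding graph_def by (auto intro: finite_subset)
  have "card (supports_in E (W - {x, y})) < card (leaves_in E (W - {x, y}))"
    using extremal_in_remove_pendant_edge[OF g f W ext ni x _ ne] y by simp
  moreover have "forest_weight E W \<le> forest_weight E (W - {x, y}) + 2"
    using forest_weight_remove_isolated_edge[OF finW x(1,2) y x(3)] .
  moreover have "card (leaves_in E W) \<le> card (supports_in E W)"
    using card_leaves_in_le_card_supports_in[OF finW nss] .
  moreover have "card W = card (W - {x, y}) + 2" using card_Diff_pair[OF finW x(1) yW x(3)] .
  ultimately show False unfolding forest_weight_def by linarith
qed

lemma no_strong_support_in_unique_leaf:
  assumes nss: "no_strong_support_in E W" and fin: "finite W"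
    and "y \<in> W" "x \<in> nbhd_in E W y" "x \<in> leaves_in E W"
  shows "\<forall>u\<in>nbhd_in E W y. u \<in> leaves_in E W \<longrightarrow> u = x"
proof (intro ballI impI)
  fix u assume u: "u \<in> nbhd_in E W y" "u \<in> leaves_in E W"
  have "card {x, u} \<le> card {u\<in>nbhd_in E W y. u \<in> leaves_in E W}"
    using u assms(4,5) finite_nbhd_in[OF fin] by (intro card_mono) auto
  moreover have "card {u\<in>nbhd_in E W y. u \<in> leaves_in E W} < 2"
    using nss assms(3) unfolding no_strong_support_in_def by blast
  ultimately show "u = x" by (cases "u = x") auto
qed

lemma extremal_in_pendant_path_structure:
  assumes g: "graph V E" and f: "forest V E" and W: "W \<subseteq> V"
    and ext: "extremal_in E W" and ni: "no_isolated_in E W" and nss: "no_strong_support_in E W"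
    and x: "x \<in> W" "nbhd_in E W x = {y}" "x \<noteq> y" and y: "nbhd_in E W y = {x, z}" "z \<noteq> x"
  shows "\<exists>w. nbhd_in E W z = {y, w} \<and> w \<in> supports_in E W \<and> w \<in> W - {x, y, z}"
proof -
  define W' where "W' = W - {x, y}"
  have finW: "finite W" using g W unfolding graph_def by (auto intro: finite_subset)
  have yW: "y \<in> W" and zW: "z \<in> W"
    using nbhd_in_subset[of E W x] nbhd_in_subset[of E W y] x(2) y by auto
  have zy: "z \<noteq> y" using not_in_nbhd_in_self[OF g, of y W] y(1) by auto
  have yL: "y \<notin> leaves_in E W" using y by (simp add: leaves_in_def)
  have xL: "x \<in> leaves_in E W" using x by (simp add: leaves_in_def)
  have only: "\<forall>u\<in>nbhd_in E W y. u \<in> leaves_in E W \<longrightarrow> u = x"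
    using no_strong_support_in_unique_leaf[OF nss finW yW _ xL] y by simp
  have finW': "finite W'" using finW W'_def by simp
  have finL: "finite (leaves_in E W)" and finS: "finite (supports_in E W)"
    using finite_leaves_in[OF finW] finite_supports_in[OF finW] .
  have lt: "card (supports_in E W') < card (leaves_in E W')"
    using extremal_in_remove_pendant_edge[OF g f W ext ni x only] zW zy y(2) W'_def by blast
  have L: "leaves_in E W' \<subseteq> insert z (leaves_in E W - {x})"
    using leaves_in_remove_pendant_edge[OF x(2)] y W'_def by auto
  have "x \<notin> supports_in E W" using x(2) yL by (simp add: supports_in_def)
  then have S: "supports_in E W - {y} \<subseteq> supports_in E W'"
    using supports_in_remove_pendant_edge[OF x(2,1) only] W'_def by blast
  then have S': "card (supports_in E W - {y}) \<le> card (supports_in E W')"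
    using finite_supports_in[OF finW'] by (intro card_mono)
  have LS: "card (leaves_in E W) \<le> card (supports_in E W)"
    using card_leaves_in_le_card_supports_in[OF finW nss] .
  have "y \<in> supports_in E W" using yW y xL by (auto simp: supports_in_def)
  then have cS: "card (supports_in E W - {y}) + 1 = card (supports_in E W)"
    using card_Suc_Diff1[OF finS] by simp
  have cL: "card (leaves_in E W - {x}) + 1 = card (leaves_in E W)"
    using card_Suc_Diff1[OF finL xL] by simp
  have zL': "z \<in> leaves_in E W'"
  proof (rule ccontr)
    assume "z \<notin> leaves_in E W'"
    then have "card (leaves_in E W') \<le> card (leaves_in E W - {x})"
      using L finL by (intro card_mono) auto
    then show False using lt S' LS cS cL by linarith
  qed
  have "card (leaves_in E W') \<le> card (insert z (leaves_in E W - {x}))"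
    using L finL by (intro card_mono) auto
  then have L': "card (leaves_in E W') \<le> card (leaves_in E W)"
    using card_insert_le_m1[of "card (leaves_in E W)" "leaves_in E W - {x}" z] cL by linarith
  obtain w where w: "nbhd_in E W' z = {w}" using zL' unfolding leaves_in_iff by blast
  have wW': "w \<in> W'" using subsetD[OF nbhd_in_subset, of w E W' z] w by simp
  have "x \<notin> nbhd_in E W z" using nbhd_in_leaf_unique[OF x(2), of z] zW zy by blast
  moreover have "y \<in> nbhd_in E W z" using nbhd_in_commute[of z E W y] y yW by simp
  ultimately have Nz: "nbhd_in E W z = {y, w}" using w W'_def by (auto simp: nbhd_in_Diff)
  have wz: "w \<noteq> z" using not_in_nbhd_in_self[OF g, of z W'] w by auto
  have "w \<in> supports_in E W"
  proof (rule ccontr)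
    assume wS: "w \<notin> supports_in E W"
    have "z \<in> nbhd_in E W' w"
      using nbhd_in_commute[of w E W' z] w subsetD[OF leaves_in_subset zL'] by simp
    then have "w \<in> supports_in E W'" using wW' zL' by (auto simp: supports_in_def)
    then have "insert w (supports_in E W - {y}) \<subseteq> supports_in E W'" using S by blast
    then have "card (insert w (supports_in E W - {y})) \<le> card (supports_in E W')"
      using finite_supports_in[OF finW'] by (intro card_mono)
    then show False using wS finS lt L' LS cS by simp
  qed
  then show ?thesis using Nz wW' wz W'_def by blast
qed

lemma no_strong_support_in_subset:
  assumes nss: "no_strong_support_in E W" and W': "W' \<subseteq> W" and fin: "finite W"
    and same: "\<forall>v\<in>W'. v \<noteq> w \<longrightarrow> nbhd_in E W' v = nbhd_in E W v"
    and u: "u \<in> W'" "nbhd_in E W' u = {w}"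
  shows "no_strong_support_in E W'"
  unfolding no_strong_support_in_def
proof
  fix v assume v: "v \<in> W'"
  show "card {a\<in>nbhd_in E W' v. a \<in> leaves_in E W'} < 2"
  proof (cases "v = u")
    case True
    then show ?thesis
      using u card_mono[of "{w}" "{a\<in>nbhd_in E W' v. a \<in> leaves_in E W'}"] by fastforce
  next
    case False
    have "{a\<in>nbhd_in E W' v. a \<in> leaves_in E W'} \<subseteq> {a\<in>nbhd_in E W v. a \<in> leaves_in E W}"
    proof (intro subsetI CollectI conjI; elim CollectE conjE)
      fix a assume a: "a \<in> nbhd_in E W' v" "a \<in> leaves_in E W'"
      have aW': "a \<in> W'" using subsetD[OF leaves_in_subset a(2)] .
      have "a \<noteq> w"
      proof
        assume "a = w"
        then obtain t where "nbhd_in E W' w = {t}" using a(2) unfolding leaves_in_iff by blast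
        moreover have "v \<in> nbhd_in E W' w" using nbhd_in_commute[OF a(1) v] \<open>a = w\<close> by simp
        moreover have "u \<in> nbhd_in E W' w" using nbhd_in_commute[of w E W' u] u by simp
        ultimately show False using False by simp
      qed
      then have "nbhd_in E W' a = nbhd_in E W a" using same aW' by blast
      then show "a \<in> leaves_in E W" using a(2) aW' W' by (auto simp: leaves_in_def)
      show "a \<in> nbhd_in E W v" using a(1) W' by (auto simp: nbhd_in_def)
    qed
    then have "card {a\<in>nbhd_in E W' v. a \<in> leaves_in E W'}
        \<le> card {a\<in>nbhd_in E W v. a \<in> leaves_in E W}"
      using finite_nbhd_in[OF fin] by (intro card_mono) auto
    moreover have "card {a\<in>nbhd_in E W v. a \<in> leaves_in E W} < 2"
      using nss v W' unfolding no_strong_support_in_def by blast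
    ultimately show ?thesis by linarith
  qed
qed

lemma nbhd_induced_edges: "nbhd (induced_edges E W) v = (if v \<in> W then nbhd_in E W v else {})"
  by (auto simp: nbhd_def induced_edges_def nbhd_in_def)

lemma induced_edges_remove_pendant_path:
  assumes g: "graph V E" and W: "x \<in> W" "y \<in> W" "z \<in> W"
    and N: "nbhd_in E W x = {y}" "nbhd_in E W y = {x, z}" "nbhd_in E W z = {y, w}"
  shows "induced_edges E W = induced_edges E (W - {x, y, z}) \<union> {{w, z}, {z, y}, {y, x}}"
proof
  have "w \<in> W" using nbhd_in_subset[of E W z] N(3) by simp
  then show "induced_edges E (W - {x, y, z}) \<union> {{w, z}, {z, y}, {y, x}} \<subseteq> induced_edges E W"
    using W N by (auto simp: induced_edges_def nbhd_in_def nbhd_def insert_commute)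
next
  show "induced_edges E W \<subseteq> induced_edges E (W - {x, y, z}) \<union> {{w, z}, {z, y}, {y, x}}"
  proof
    fix e assume e: "e \<in> induced_edges E W"
    then have eE: "e \<in> E" and eW: "e \<subseteq> W" by (auto simp: induced_edges_def)
    show "e \<in> induced_edges E (W - {x, y, z}) \<union> {{w, z}, {z, y}, {y, x}}"
    proof (cases "e \<inter> {x, y, z} = {}")
      case True
      then show ?thesis using eE eW by (auto simp: induced_edges_def)
    next
      case False
      then obtain a where a: "a \<in> e" "a \<in> {x, y, z}" by blast
      obtain b where b: "e = {a, b}" "b \<in> nbhd E a" using graph_edgeE[OF g eE a(1)] .
      then have "b \<in> nbhd_in E W a" using eW by (auto simp: nbhd_in_def)
      then show ?thesis using a(2) b(1) N by (auto simp: insert_commute)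
    qed
  qed
qed

lemma extremal_in_remove_pendant_path_inherits:
  assumes g: "graph V E" and finW: "finite W"
    and ni: "no_isolated_in E W" and nss: "no_strong_support_in E W" and ext: "extremal_in E W"
    and x: "x \<in> W" "nbhd_in E W x = {y}" "x \<noteq> y"
    and N: "nbhd_in E W y = {x, z}" "nbhd_in E W z = {y, w}" "w \<in> W - {x, y, z}"
    and u: "u \<in> nbhd_in E W w" "u \<in> leaves_in E W"
  defines "W' \<equiv> W - {x, y, z}"
  shows "2 \<le> card W'" "no_isolated_in E W'" "no_strong_support_in E W'" "extremal_in E W'"
    and "support_vertex (induced_edges E W') w"
proof -
  have yW: "y \<in> W" and zW: "z \<in> W"
    using nbhd_in_subset[of E W x] nbhd_in_subset[of E W y] x(2) N(1) by auto
  have wW: "w \<in> W" using N(3) by blast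
  have N': "nbhd_in E W' v = nbhd_in E W v - {x, y, z}" for v by (simp add: W'_def nbhd_in_Diff)
  have same: "\<forall>v\<in>W'. v \<noteq> w \<longrightarrow> nbhd_in E W' v = nbhd_in E W v"
  proof (intro ballI impI)
    fix v assume v: "v \<in> W'" "v \<noteq> w"
    then have vW: "v \<in> W" by (simp add: W'_def)
    have "a \<notin> nbhd_in E W v" if "a \<in> {x, y, z}" for a
      using that nbhd_in_commute[of a E W v] vW v x(2) N(1,2) W'_def by auto
    then show "nbhd_in E W' v = nbhd_in E W v" using N' by blast
  qed
  have uw: "u \<noteq> w" using not_in_nbhd_in_self[OF g, of w W] u(1) by auto
  have Nu: "nbhd_in E W u = {w}"
    using u nbhd_in_commute[OF u(1) wW] unfolding leaves_in_iff by auto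
  have uW': "u \<in> W'"
    using u(2) Nu x(2) N N(3) x(3) subsetD[OF leaves_in_subset u(2)] W'_def
    by (auto simp: leaves_in_def)
  have Nu': "nbhd_in E W' u = {w}" using same uW' uw Nu by blast
  have wW': "w \<in> W'" using N(3) W'_def by simp
  show "2 \<le> card W'"
    using card_mono[of W' "{u, w}"] uW' wW' uw finW W'_def by simp
  show "no_isolated_in E W'"
    unfolding no_isolated_in_def
  proof
    fix v assume v: "v \<in> W'"
    show "nbhd_in E W' v \<noteq> {}"
    proof (cases "v = w")
      case True
      then show ?thesis using nbhd_in_commute[of w E W' u] Nu' uW' by auto
    next
      case False
      then show ?thesis using same v ni W'_def by (auto simp: no_isolated_in_def)
    qed
  qed
  show "no_strong_support_in E W'"
    using no_strong_support_in_subset[OF nss _ finW same uW' Nu'] W'_def by blast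
  have "z \<noteq> x" using x(2) N(2,3) by auto
  moreover have "y \<noteq> z" using N(1) not_in_nbhd_in_self[OF g, of y W] by auto
  ultimately show "extremal_in E W'"
    using extremal_in_remove_pendant_path[OF ext x _ _ _ finW, of "{x, y, z}"] x(1,3) yW zW W'_def
    by auto
  show "support_vertex (induced_edges E W') w"
    using nbhd_in_commute[of w E W' u] Nu' uW' wW'
    unfolding support_vertex_def leaf_def nbhd_induced_edges by (intro bexI[of _ u]) auto
qed

lemma induced_edges_pair:
  assumes "graph V E" "{x, y} \<in> E"
  shows "induced_edges E {x, y} = {{x, y}}"
proof -
  have "e = {x, y}" if e: "e \<in> E" "e \<subseteq> {x, y}" for e
  proof -
    have "card e = 2" using e(1) assms(1) unfolding graph_def by blast
    moreover have "card {x, y} \<le> 2" by (simp add: card_insert_if)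
    ultimately show ?thesis using card_seteq[of "{x, y}" e] e(2) by simp
  qed
  then show ?thesis using assms(2) by (auto simp: induced_edges_def)
qed

lemma extremal_in_in_family_T:
  assumes g: "graph V E" and f: "forest V E"
  shows "W \<subseteq> V \<Longrightarrow> 2 \<le> card W \<Longrightarrow> no_isolated_in E W \<Longrightarrow> no_strong_support_in E W \<Longrightarrow>
    extremal_in E W \<Longrightarrow> in_family_T W (induced_edges E W)"
proof (induction "card W" arbitrary: W rule: less_induct)
  case less
  note W = less.prems(1) and ni = less.prems(3) and nss = less.prems(4) and ext = less.prems(5)
  have finW: "finite W" using g W unfolding graph_def by (auto intro: finite_subset)
  have "W \<noteq> {}" using less.prems(2) by auto
  then obtain x y where x: "x \<in> W" "nbhd_in E W x = {y}"
    and strong_or_low: "2 \<le> card {u\<in>nbhd_in E W y. u \<in> leaves_in E W} \<or> card (nbhd_in E W y) \<le> 2"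
    using forest_leaf_with_strong_or_low_degree_support[OF g f W _ ni] by blast
  have yW: "y \<in> W" using nbhd_in_subset[of E W x] x(2) by simp
  have xy: "x \<noteq> y" using not_in_nbhd_in_self[OF g, of x W] x(2) by auto
  have yx: "x \<in> nbhd_in E W y" using nbhd_in_commute[of y E W x] x by simp
  have deg: "card (nbhd_in E W y) \<le> 2"
    using strong_or_low nss yW unfolding no_strong_support_in_def by auto
  consider "nbhd_in E W y = {x}" | z where "nbhd_in E W y = {x, z}" "z \<noteq> x"
  proof (cases "nbhd_in E W y = {x}")
    case False
    then obtain z where z: "z \<in> nbhd_in E W y" "z \<noteq> x" using yx by blast
    then have "{x, z} \<subseteq> nbhd_in E W y" "card (nbhd_in E W y) \<le> card {x, z}" using yx deg by auto
    then have "nbhd_in E W y = {x, z}" using card_seteq[OF finite_nbhd_in[OF finW]] by blast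
    then show thesis using that z(2) by blast
  qed
  then show ?case
  proof cases
    case 1
    have "W = {x, y}" using extremal_in_isolated_edge[OF g f W ext ni nss x xy 1] .
    moreover have "{x, y} \<in> E" using yx by (simp add: nbhd_in_def nbhd_def)
    ultimately show ?thesis using induced_edges_pair[OF g] in_family_T.P2[OF xy] by simp
  next
    case (2 z)
    obtain w where w: "nbhd_in E W z = {y, w}" "w \<in> supports_in E W" "w \<in> W - {x, y, z}"
      using extremal_in_pendant_path_structure[OF g f W ext ni nss x xy 2] by blast
    then obtain u where u: "u \<in> nbhd_in E W w" "u \<in> leaves_in E W" by (auto simp: supports_in_def)
    define W' where "W' = W - {x, y, z}"
    note inherits =
      extremal_in_remove_pendant_path_inherits[OF g finW ni nss ext x xy 2(1) w(1,3) u]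
    have zW: "z \<in> W" using nbhd_in_subset[of E W y] 2(1) by simp
    have "card W' < card W" using finW x(1) W'_def by (intro psubset_card_mono) auto
    then have "in_family_T W' (induced_edges E W')"
      using less.hyps[of W'] inherits W W'_def by auto
    then have "in_family_T (W' \<union> {z, y, x}) (induced_edges E W' \<union> {{w, z}, {z, y}, {y, x}})"
      using in_family_T.O1[of W' _ w z y x] inherits(5) w(3) 2(2) xy zW
        not_in_nbhd_in_self[OF g, of y W] 2(1) W'_def by auto
    moreover have "W' \<union> {z, y, x} = W" using x(1) yW zW W'_def by auto
    ultimately show ?thesis
      using induced_edges_remove_pendant_path[OF g x(1) yW zW x(2) 2(1) w(1)] W'_def by simp
  qed
qed

lemma graph_nbhd_in_self: "graph V E \<Longrightarrow> nbhd_in E V = nbhd E"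
  using nbhd_subset by (fastforce simp: nbhd_in_def fun_eq_iff)

lemma graph_induced_edges_self: "graph V E \<Longrightarrow> induced_edges E V = E"
  by (auto simp: induced_edges_def graph_def)

lemma no_strong_support_in_self:
  assumes "graph V E" "\<forall>v\<in>V. \<not> strong_support_vertex E v"
  shows "no_strong_support_in E V"
proof -
  have "leaves_in E V = {v\<in>V. leaf E v}"
    using graph_nbhd_in_self[OF assms(1)] by (simp add: leaves_in_def leaf_def)
  then have "{u\<in>nbhd_in E V v. u \<in> leaves_in E V} = {u\<in>nbhd E v. leaf E u}" for v
    using graph_nbhd_in_self[OF assms(1)] nbhd_subset[OF assms(1), of v] by auto
  then show ?thesis
    using assms(2) unfolding no_strong_support_in_def strong_support_vertex_def by auto
qed

context
  fixes V :: "'a set" and E :: "'a set set"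
  assumes g: "graph V E" and f: "forest V E" and n: "card V \<ge> 2"
    and ni: "\<forall>v\<in>V. nbhd E v \<noteq> {}" and nss: "\<forall>v\<in>V. \<not> strong_support_vertex E v"
begin

lemma forest_grundy_total_domination_lower_bound:
  "2 * (card V + 1) \<le> 3 * grundy_total_domination V E"
proof -
  have "no_isolated_in E V" using ni graph_nbhd_in_self[OF g] by (simp add: no_isolated_in_def)
  then obtain S where S: "set S \<subseteq> V" "legal_from (nbhd E) {} S"
    and bound: "2 * forest_weight E V \<le> 3 * int (length S)"
    using forest_legal_lower_bound[OF g f order_refl] n graph_nbhd_in_self[OF g] by fastforce
  have "finite V" using g by (simp add: graph_def)
  then have "int (card V) + 1 \<le> forest_weight E V"
    using card_leaves_in_le_card_supports_in no_strong_support_in_self[OF g nss]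
    unfolding forest_weight_def by fastforce
  then have "int (2 * (card V + 1)) \<le> int (3 * length S)" using bound by simp
  then have "2 * (card V + 1) \<le> 3 * length S" by (simp only: of_nat_le_iff)
  then show ?thesis using grundy_total_domination_ge_legal_from[OF g ni S] by linarith
qed

lemma forest_grundy_total_domination_eq_iff:
  "3 * grundy_total_domination V E = 2 * (card V + 1) \<longleftrightarrow> in_family_T V E"
proof
  assume eq: "3 * grundy_total_domination V E = 2 * (card V + 1)"
  have "extremal_in E V"
    unfolding extremal_in_def graph_nbhd_in_self[OF g]
    using grundy_total_domination_ge_legal_from[OF g ni] eq by (metis mult_le_mono2)
  moreover have "no_isolated_in E V"
    using ni graph_nbhd_in_self[OF g] by (simp add: no_isolated_in_def)
  ultimately have "in_family_T V (induced_edges E V)"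
    using extremal_in_in_family_T[OF g f order_refl n] no_strong_support_in_self[OF g nss] by blast
  then show "in_family_T V E" using graph_induced_edges_self[OF g] by simp
next
  assume "in_family_T V E"
  moreover obtain S where "set S \<subseteq> V" "legal_from (nbhd E) {} S"
    "length S = grundy_total_domination V E"
    using grundy_total_domination_attained[OF g ni] by blast
  ultimately have "3 * grundy_total_domination V E \<le> 2 * (card V + 1)"
    using in_family_T_legal_upper_bound by metis
  then show "3 * grundy_total_domination V E = 2 * (card V + 1)"
    using forest_grundy_total_domination_lower_bound by linarith
qed

end

theorem mainTheorem11:
  fixes V :: "'a set" and E :: "'a set set"
  assumes "is_tree V E"
    and "card V \<ge> 2"
    and "\<forall>v\<in>V. \<not> strong_support_vertex E v"
  shows "real (grundy_total_domination V E) \<ge> 2 / 3 * (real (card V) + 1)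
    \<and> (real (grundy_total_domination V E) = 2 / 3 * (real (card V) + 1)
         \<longleftrightarrow> in_family_T V E)"
proof -
  have g: "graph V E" and conn: "connected_graph V E" and "V \<noteq> {}" "card E = card V - 1"
    using assms(1) unfolding is_tree_def by auto
  moreover have "card E + 1 = card V" using calculation(4) assms(2) by simp
  ultimately have f: "forest V E" using tree_is_forest by blast
  have ni: "\<forall>v\<in>V. nbhd E v \<noteq> {}" using connected_no_isolated[OF g conn assms(2)] by blast
  have "real (2 * (card V + 1)) \<le> real (3 * grundy_total_domination V E)"
    using forest_grundy_total_domination_lower_bound[OF g f assms(2) ni assms(3)]
    by (simp only: of_nat_le_iff)
  moreover have "real (3 * grundy_total_domination V E) = real (2 * (card V + 1)) \<longleftrightarrow> in_family_T V E"
    using forest_grundy_total_domination_eq_iff[OF g f assms(2) ni assms(3)]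
    by (simp only: of_nat_eq_iff)
  ultimately show ?thesis by auto
qed

end
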